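(* Let $k\geq 3$ and let $G$ be a diregular $(2,k,+3)$-digraph. Let $u,v$ be distinct vertices of $G$ having exactly one common out-neighbour $u_2$, and write $N^+(u)=\{u_1,u_2\}$, $N^+(v)=\{v_1,u_2\}$. Then $v_1 \in O(u)$ and $u_1 \in O(v)$.
   Context: A digraph is $k$-geodetic if for every ordered pair of vertices $x,y$ there is at most one directed path from $x$ to $y$ of length at most $k$ (the trivial path of length $0$ counts, so there are no directed cycles of length at most $k$). $M(d,k)=1+d+\dots+d^k$. A diregular $(d,k,+\epsilon)$-digraph is a $k$-geodetic digraph of order $M(d,k)+\epsilon$ in which every vertex has in-degree and out-degree exactly $d$. $N^+(x)$ is the set of out-neighbours of $x$. The distance $d(x,y)$ is the length of a shortest directed path from $x$ to $y$ ($\infty$ if none). The outlier set of a vertex $x$ is $O(x)=\{y\in V(G): d(x,y)\geq k+1\}$; in a diregular $(2,k,+3)$-digraph, $|O(x)|=3$ for every $x$. *)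

theory Defs
  imports Main "HOL-Library.Extended_Nat"
begin

text \<open>A finite digraph is given by a finite vertex set V and an arc relation A
 (no multiple arcs). A walk is a nonempty vertex list with consecutive arcs;
 its length is the number of arcs.\<close>

definition is_walk :: "'a set \<Rightarrow> ('a \<Rightarrow> 'a \<Rightarrow> bool) \<Rightarrow> 'a list \<Rightarrow> bool" where
  "is_walk V A p \<longleftrightarrow> p \<noteq> [] \<and> set p \<subseteq> V \<and>
     (\<forall>i. Suc i < length p \<longrightarrow> A (p ! i) (p ! Suc i))"

definition walks_upto :: "'a set \<Rightarrow> ('a \<Rightarrow> 'a \<Rightarrow> bool) \<Rightarrow> nat \<Rightarrow> 'a \<Rightarrow> 'a \<Rightarrow> 'a list set" where
  "walks_upto V A k x y = {p. is_walk V A p \<and> hd p = x \<and> last p = y \<and> length p - 1 \<le> k}"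

definition k_geodetic :: "'a set \<Rightarrow> ('a \<Rightarrow> 'a \<Rightarrow> bool) \<Rightarrow> nat \<Rightarrow> bool" where
  "k_geodetic V A k \<longleftrightarrow> (\<forall>x\<in>V. \<forall>y\<in>V. card (walks_upto V A k x y) \<le> 1 \<and> finite (walks_upto V A k x y))"

definition out_nbrs :: "'a set \<Rightarrow> ('a \<Rightarrow> 'a \<Rightarrow> bool) \<Rightarrow> 'a \<Rightarrow> 'a set" where
  "out_nbrs V A x = {y\<in>V. A x y}"

definition in_nbrs :: "'a set \<Rightarrow> ('a \<Rightarrow> 'a \<Rightarrow> bool) \<Rightarrow> 'a \<Rightarrow> 'a set" where
  "in_nbrs V A x = {y\<in>V. A y x}"

definition moore_bound :: "nat \<Rightarrow> nat \<Rightarrow> nat" where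
  "moore_bound d k = (\<Sum>i\<le>k. d ^ i)"

definition diregular_digraph :: "'a set \<Rightarrow> ('a \<Rightarrow> 'a \<Rightarrow> bool) \<Rightarrow> nat \<Rightarrow> bool" where
  "diregular_digraph V A d \<longleftrightarrow> finite V \<and> (\<forall>x y. A x y \<longrightarrow> x \<in> V \<and> y \<in> V) \<and>
     (\<forall>x\<in>V. card (out_nbrs V A x) = d \<and> card (in_nbrs V A x) = d)"

definition dke_digraph :: "'a set \<Rightarrow> ('a \<Rightarrow> 'a \<Rightarrow> bool) \<Rightarrow> nat \<Rightarrow> nat \<Rightarrow> nat \<Rightarrow> bool" where
  "dke_digraph V A d k e \<longleftrightarrow> diregular_digraph V A d \<and> k_geodetic V A k \<and>
     card V = moore_bound d k + e"

text \<open>Distance: length of a shortest walk, infinity if none.\<close>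
definition dist :: "'a set \<Rightarrow> ('a \<Rightarrow> 'a \<Rightarrow> bool) \<Rightarrow> 'a \<Rightarrow> 'a \<Rightarrow> enat" where
  "dist V A x y = (INF p\<in>{p. is_walk V A p \<and> hd p = x \<and> last p = y}. enat (length p - 1))"

definition outliers :: "'a set \<Rightarrow> ('a \<Rightarrow> 'a \<Rightarrow> bool) \<Rightarrow> nat \<Rightarrow> 'a \<Rightarrow> 'a set" where
  "outliers V A k x = {y\<in>V. dist V A x y \<ge> enat (k + 1)}"

end

theory Submission
  imports Defs
begin

(* Suppose d(u, v1) <= k. The only walk of length at most k from v to u2 is the arc v -> u2,
   so a short walk from u to v1 cannot start with u2; hence d(u1, v1) < k. Then v is an outlier
   of u: extending a walk of length at most k from u to v by v -> u2 or v -> v1 would duplicate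
   the arc u -> u2, close a short cycle through u2, or duplicate the walk from u1 to v1.
   If d(u1, v1) = n <= k - 2, the 2^(k-n) >= 4 vertices at distance k - n from v1 are at distance
   k from u1, hence lie in {u} together with the two outliers of u other than v: impossible.
   So d(u1, v1) = k - 1; take a geodesic u1 ~> g -> w -> v1. The outliers of v are then w, an
   out-neighbour w' <> v1 of w, and one of u, u1, and every other vertex at distance less than k
   from u1 is at distance less than k from v1. Applied to an out-neighbour x <> w of g (and, if
   k = 3, to an out-neighbour of x) this yields two walks of different lengths at most k from v1
   to the same vertex. Exchanging u and v gives the second claim. *)

section \<open>Walks of prescribed length\<close>

lemma is_walk_Cons:
  assumes "q \<noteq> []"
  shows "is_walk V A (x # q) \<longleftrightarrow> x \<in> V \<and> A x (hd q) \<and> is_walk V A q"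
proof -
  have "(\<forall>i. Suc i < length (x # q) \<longrightarrow> A ((x # q) ! i) ((x # q) ! Suc i)) \<longleftrightarrow>
        A x (hd q) \<and> (\<forall>i. Suc i < length q \<longrightarrow> A (q ! i) (q ! Suc i))"
    using assms
    by (auto simp: hd_conv_nth less_Suc_eq_0_disj All_less_Suc2 nth_Cons split: nat.splits
        simp del: length_greater_0_conv)
  then show ?thesis
    using assms unfolding is_walk_def by auto
qed

locale digraph =
  fixes V :: "'a set" and A :: "'a \<Rightarrow> 'a \<Rightarrow> bool"
  assumes arc_in_V: "A x y \<Longrightarrow> x \<in> V \<and> y \<in> V"
begin

definition has_walk :: "'a \<Rightarrow> 'a \<Rightarrow> nat \<Rightarrow> bool" where
  "has_walk x y n \<longleftrightarrow> (\<exists>p. is_walk V A p \<and> hd p = x \<and> last p = y \<and> length p = Suc n)"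

lemma has_walk_in_V: "has_walk x y n \<Longrightarrow> x \<in> V \<and> y \<in> V"
  unfolding has_walk_def is_walk_def by (metis hd_in_set last_in_set subsetD)

lemma has_walk_0 [simp]: "has_walk x y 0 \<longleftrightarrow> x = y \<and> x \<in> V"
proof
  show "has_walk x y 0 \<Longrightarrow> x = y \<and> x \<in> V"
    unfolding has_walk_def is_walk_def by (auto simp: length_Suc_conv)
  show "x = y \<and> x \<in> V \<Longrightarrow> has_walk x y 0"
    unfolding has_walk_def is_walk_def by (intro exI[of _ "[x]"]) auto
qed

lemma has_walk_Suc: "has_walk x y (Suc n) \<longleftrightarrow> (\<exists>z. A x z \<and> has_walk z y n)"
proof
  assume "has_walk x y (Suc n)"
  then obtain z q where "is_walk V A (x # z # q)" "last (z # q) = y" "length q = n"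
    unfolding has_walk_def by (auto simp: length_Suc_conv)
  then show "\<exists>z. A x z \<and> has_walk z y n"
    unfolding has_walk_def by (auto simp: is_walk_Cons intro!: exI[of _ "z # q"])
next
  assume "\<exists>z. A x z \<and> has_walk z y n"
  then obtain q where "A x (hd q)" "is_walk V A q" "last q = y" "length q = Suc n"
    unfolding has_walk_def by auto
  then show "has_walk x y (Suc n)"
    unfolding has_walk_def using arc_in_V
    by (intro exI[of _ "x # q"]) (auto simp: is_walk_Cons)
qed

lemma has_walk_Suc_0 [simp]: "has_walk x y (Suc 0) \<longleftrightarrow> A x y"
  using has_walk_Suc[of x y 0] arc_in_V by auto

lemma has_walk_ConsI: "A x y \<Longrightarrow> has_walk y z n \<Longrightarrow> has_walk x z (Suc n)"
  using has_walk_Suc by blast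

lemma has_walk_add: "has_walk x y n \<Longrightarrow> has_walk y z m \<Longrightarrow> has_walk x z (n + m)"
  by (induction n arbitrary: x) (auto simp: has_walk_Suc)

lemma has_walk_snoc: "has_walk x y (Suc n) \<longleftrightarrow> (\<exists>z. has_walk x z n \<and> A z y)"
proof
  show "has_walk x y (Suc n) \<Longrightarrow> \<exists>z. has_walk x z n \<and> A z y"
  proof (induction n arbitrary: x)
    case 0
    then show ?case
      using arc_in_V by auto
  next
    case (Suc n)
    then obtain x' where "A x x'" "has_walk x' y (Suc n)"
      using has_walk_Suc[of x y "Suc n"] by blast
    then show ?case
      using Suc.IH has_walk_ConsI by blast
  qed
  show "\<exists>z. has_walk x z n \<and> A z y \<Longrightarrow> has_walk x y (Suc n)"
    by (metis Suc_eq_plus1 One_nat_def has_walk_Suc_0 has_walk_add)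
qed

lemma has_walk_snocI: "has_walk x y n \<Longrightarrow> A y z \<Longrightarrow> has_walk x z (Suc n)"
  using has_walk_snoc by blast

lemma has_walk_first_arc:
  assumes "has_walk x y n" "x \<noteq> y"
  obtains m z where "n = Suc m" "A x z" "has_walk z y m"
  using assms by (cases n) (auto simp: has_walk_Suc)

lemma outliers_eq: "outliers V A k x = {y \<in> V. \<forall>n\<le>k. \<not> has_walk x y n}"
proof -
  have "enat (k + 1) \<le> dist V A x y \<longleftrightarrow> (\<forall>n\<le>k. \<not> has_walk x y n)" for y
  proof -
    have "enat (k + 1) \<le> dist V A x y \<longleftrightarrow>
        (\<forall>p. is_walk V A p \<and> hd p = x \<and> last p = y \<longrightarrow> k + 1 \<le> length p - 1)"
      unfolding dist_def le_INF_iff by simp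
    also have "\<dots> \<longleftrightarrow> (\<forall>n\<le>k. \<not> has_walk x y n)"
      unfolding has_walk_def
    proof (intro iffI allI impI notI)
      fix n assume "\<forall>p. is_walk V A p \<and> hd p = x \<and> last p = y \<longrightarrow> k + 1 \<le> length p - 1"
        and "n \<le> k" and "\<exists>p. is_walk V A p \<and> hd p = x \<and> last p = y \<and> length p = Suc n"
      then show False by force
    next
      fix p assume "\<forall>n\<le>k. \<not> (\<exists>p. is_walk V A p \<and> hd p = x \<and> last p = y \<and> length p = Suc n)"
        and "is_walk V A p \<and> hd p = x \<and> last p = y"
      moreover have "length p = Suc (length p - 1)"
        using calculation(2) unfolding is_walk_def by simp
      ultimately show "k + 1 \<le> length p - 1"
        by (metis not_less_eq_eq Suc_eq_plus1)
    qed
    finally show ?thesis .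
  qed
  then show ?thesis
    unfolding outliers_def by auto
qed

end

locale geodetic_digraph = digraph +
  fixes k :: nat
  assumes geodetic: "k_geodetic V A k"
begin

lemma walk_unique:
  assumes "is_walk V A p" "is_walk V A q" "hd p = hd q" "last p = last q"
    "length p \<le> Suc k" "length q \<le> Suc k"
  shows "p = q"
proof -
  let ?S = "walks_upto V A k (hd p) (last p)"
  have "hd p \<in> V" "last p \<in> V"
    using assms(1) unfolding is_walk_def by auto
  then have "card ?S \<le> 1" "finite ?S"
    using geodetic unfolding k_geodetic_def by auto
  moreover have "p \<in> ?S" "q \<in> ?S"
    using assms unfolding walks_upto_def by auto
  ultimately show ?thesis
    using card_le_Suc0_iff_eq by (metis One_nat_def)
qed

lemma has_walk_length_unique:
  "has_walk x y n \<Longrightarrow> has_walk x y m \<Longrightarrow> n \<le> k \<Longrightarrow> m \<le> k \<Longrightarrow> n = m"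
  unfolding has_walk_def using walk_unique by (metis Suc_le_mono Suc_inject)

lemma has_walk_first_arc_unique:
  assumes "A x z1" "A x z2" "has_walk z1 y n1" "has_walk z2 y n2" "n1 < k" "n2 < k"
  shows "z1 = z2"
proof -
  obtain p1 where p1: "is_walk V A p1" "hd p1 = z1" "last p1 = y" "length p1 = Suc n1"
    using assms(3) unfolding has_walk_def by auto
  obtain p2 where p2: "is_walk V A p2" "hd p2 = z2" "last p2 = y" "length p2 = Suc n2"
    using assms(4) unfolding has_walk_def by auto
  have "p1 \<noteq> []" "p2 \<noteq> []"
    using p1(4) p2(4) by auto
  then have "is_walk V A (x # p1)" "is_walk V A (x # p2)"
    using p1 p2 assms(1,2) arc_in_V by (auto simp: is_walk_Cons)
  then have "x # p1 = x # p2"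
    using walk_unique[of "x # p1" "x # p2"] p1 p2 assms(5,6) \<open>p1 \<noteq> []\<close> \<open>p2 \<noteq> []\<close> by simp
  then show ?thesis
    using p1 p2 by auto
qed

lemma no_shortcut_arc: "2 \<le> k \<Longrightarrow> A x y \<Longrightarrow> A y z \<Longrightarrow> \<not> A x z"
  using has_walk_length_unique[of x z 2 1] has_walk_ConsI[of x y z 1] by (auto simp: numeral_2_eq_2)

lemma no_short_cycle: "0 < n \<Longrightarrow> n \<le> k \<Longrightarrow> \<not> has_walk x x n"
  using has_walk_length_unique[of x x n 0] has_walk_in_V by fastforce

end

section \<open>Counting vertices within distance k\<close>

locale out_regular_geodetic = geodetic_digraph +
  fixes d :: nat
  assumes finite_V: "finite V"
    and out_degree: "x \<in> V \<Longrightarrow> card (out_nbrs V A x) = d"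
begin

lemma finite_walk_targets: "finite {y. has_walk x y n}"
  using finite_V has_walk_in_V by (auto intro: rev_finite_subset)

lemma card_walk_targets: "n \<le> k \<Longrightarrow> x \<in> V \<Longrightarrow> card {y. has_walk x y n} = d ^ n"
proof (induction n arbitrary: x)
  case 0
  then have "{y. has_walk x y 0} = {x}"
    by auto
  then show ?case
    by simp
next
  case (Suc n)
  have "{y. has_walk x y (Suc n)} = (\<Union>z\<in>out_nbrs V A x. {y. has_walk z y n})"
    by (auto simp: has_walk_Suc out_nbrs_def dest: arc_in_V)
  also have "card \<dots> = (\<Sum>z\<in>out_nbrs V A x. card {y. has_walk z y n})"
  proof (rule card_UN_disjoint)
    show "finite (out_nbrs V A x)"
      using finite_V unfolding out_nbrs_def by simp
    show "\<forall>z\<in>out_nbrs V A x. finite {y. has_walk z y n}"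
      using finite_walk_targets by blast
    show "\<forall>z1\<in>out_nbrs V A x. \<forall>z2\<in>out_nbrs V A x. z1 \<noteq> z2 \<longrightarrow>
        {y. has_walk z1 y n} \<inter> {y. has_walk z2 y n} = {}"
      using has_walk_first_arc_unique Suc.prems(1) unfolding out_nbrs_def by fastforce
  qed
  also have "\<dots> = d * d ^ n"
    using Suc out_degree unfolding out_nbrs_def by simp
  finally show ?case
    by simp
qed

lemma card_reachable: "x \<in> V \<Longrightarrow> card {y. \<exists>n\<le>k. has_walk x y n} = moore_bound d k"
proof -
  assume "x \<in> V"
  have "{y. \<exists>n\<le>k. has_walk x y n} = (\<Union>n\<le>k. {y. has_walk x y n})"
    by auto
  also have "card \<dots> = (\<Sum>n\<le>k. card {y. has_walk x y n})"
    using finite_walk_targets has_walk_length_unique by (intro card_UN_disjoint) fastforce+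
  also have "\<dots> = moore_bound d k"
    using card_walk_targets \<open>x \<in> V\<close> unfolding moore_bound_def by simp
  finally show ?thesis .
qed

lemma card_outliers: "x \<in> V \<Longrightarrow> card (outliers V A k x) = card V - moore_bound d k"
proof -
  assume "x \<in> V"
  have "outliers V A k x = V - {y. \<exists>n\<le>k. has_walk x y n}"
    using outliers_eq by auto
  moreover have "{y. \<exists>n\<le>k. has_walk x y n} \<subseteq> V"
    using has_walk_in_V by auto
  ultimately show ?thesis
    using card_reachable[OF \<open>x \<in> V\<close>] finite_V by (simp add: card_Diff_subset finite_subset)
qed

lemma finite_outliers: "finite (outliers V A k x)"
  using finite_V unfolding outliers_def by simp

lemma exists_other_out_nbr:
  assumes "2 \<le> d" "x \<in> V"
  obtains y where "A x y" "y \<noteq> z"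
proof -
  have "\<not> out_nbrs V A x \<subseteq> {z}"
    using card_mono[of "{z}" "out_nbrs V A x"] out_degree assms by auto
  then show ?thesis
    using that unfolding out_nbrs_def by blast
qed

end

section \<open>Two vertices with exactly one common out-neighbour\<close>

locale common_out_nbr = out_regular_geodetic V A k 2 for V A k +
  fixes u v u1 u2 v1 :: 'a
  assumes k_ge_3: "3 \<le> k"
    and card_V: "card V = moore_bound 2 k + 3"
    and u_in_V: "u \<in> V" and v_in_V: "v \<in> V" and u_ne_v: "u \<noteq> v"
    and common_out_nbrs: "out_nbrs V A u \<inter> out_nbrs V A v = {u2}"
    and out_nbrs_u: "out_nbrs V A u = {u1, u2}"
    and out_nbrs_v: "out_nbrs V A v = {v1, u2}"
begin

lemma common_out_nbr_swap: "common_out_nbr V A k v u v1 u2 u1"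
  using k_ge_3 card_V u_in_V v_in_V u_ne_v common_out_nbrs out_nbrs_u out_nbrs_v
  by unfold_locales (auto simp: Int_commute)

lemma arc_u_iff: "A u z \<longleftrightarrow> z = u1 \<or> z = u2"
  using out_nbrs_u arc_in_V unfolding out_nbrs_def by blast

lemma u1_ne_u2: "u1 \<noteq> u2"
  using out_degree[OF u_in_V] out_nbrs_u by force

lemma u_ne_v1: "u \<noteq> v1"
  using no_shortcut_arc[of v u u2] arc_u_iff out_nbrs_v k_ge_3 unfolding out_nbrs_def by auto

lemmas arc_v_iff = common_out_nbr.arc_u_iff[OF common_out_nbr_swap]
lemmas v1_ne_u2 = common_out_nbr.u1_ne_u2[OF common_out_nbr_swap]
lemmas v_ne_u1 = common_out_nbr.u_ne_v1[OF common_out_nbr_swap]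

lemma u1_ne_v1: "u1 \<noteq> v1"
  using common_out_nbrs out_nbrs_u out_nbrs_v u1_ne_u2 by auto

lemma card_outliers_eq_3: "x \<in> V \<Longrightarrow> card (outliers V A k x) = 3"
  using card_outliers card_V by simp

lemma out_nbrs_in_V: "u1 \<in> V" "u2 \<in> V" "v1 \<in> V"
  using arc_u_iff arc_v_iff arc_in_V by blast+

lemma walk_from_u1_avoids_u: "has_walk u1 y m \<Longrightarrow> m < k \<Longrightarrow> y \<noteq> u"
  using no_short_cycle[of "Suc m" u] has_walk_Suc arc_u_iff by auto

lemma walk_u_v1_starts_at_u1:
  assumes "has_walk u v1 n" "n \<le> k"
  obtains m where "n = Suc m" "has_walk u1 v1 m"
proof -
  obtain m z where m: "n = Suc m" "A u z" "has_walk z v1 m"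
    using has_walk_first_arc[OF assms(1) u_ne_v1] .
  have "z \<noteq> u2"
  proof
    assume "z = u2"
    then have "has_walk v v1 (Suc m)"
      using m arc_v_iff has_walk_ConsI by blast
    moreover have "has_walk v v1 (Suc 0)"
      using arc_v_iff by simp
    ultimately have "Suc m = Suc 0"
      by (rule has_walk_length_unique) (use assms(2) m k_ge_3 in simp_all)
    then show False
      using m \<open>z = u2\<close> v1_ne_u2 by simp
  qed
  then have "z = u1"
    using m(2) arc_u_iff by blast
  then show thesis
    using that m by simp
qed

lemma walk_u1_v1_length_k_of_walk_u_v:
  assumes "has_walk u v m" "m \<le> k"
  shows "has_walk u1 v1 k"
proof -
  obtain m' z where mz: "m = Suc m'" "A u z" "has_walk z v m'"
    using has_walk_first_arc[OF assms(1) u_ne_v] .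
  have "m = k"
  proof (rule ccontr)
    assume "m \<noteq> k"
    have "has_walk u u2 (Suc m)" "has_walk u u2 (Suc 0)"
      using has_walk_snocI[OF assms(1)] arc_u_iff arc_v_iff by simp_all
    then have "Suc m = Suc 0"
      by (rule has_walk_length_unique) (use \<open>m \<noteq> k\<close> assms(2) k_ge_3 in simp_all)
    then show False
      using mz by simp
  qed
  have "z \<noteq> u2"
  proof
    assume "z = u2"
    then have "has_walk u2 u2 (Suc m')"
      using has_walk_snocI[OF mz(3)] arc_v_iff by simp
    then show False
      using no_short_cycle mz \<open>m = k\<close> by simp
  qed
  then have "z = u1"
    using mz(2) arc_u_iff by blast
  then show ?thesis
    using has_walk_snocI[OF mz(3)] arc_v_iff mz(1) \<open>m = k\<close> by simp
qed

lemma v_outlier_of_u: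
  assumes "has_walk u1 v1 n" "n < k"
  shows "v \<in> outliers V A k u"
proof -
  have "\<not> has_walk u v m" if "m \<le> k" for m
  proof
    assume "has_walk u v m"
    then have "has_walk u1 v1 k"
      using walk_u1_v1_length_k_of_walk_u_v that by blast
    then have "k = n"
      by (rule has_walk_length_unique[OF _ assms(1)]) (use assms(2) in simp_all)
    then show False
      using assms(2) by simp
  qed
  then show ?thesis
    using outliers_eq v_in_V by simp
qed

lemma walk_targets_of_v1_in_outliers_of_u:
  assumes "has_walk u1 v1 n" "n + j = k" "0 < j"
  shows "{y. has_walk v1 y j} \<subseteq> insert u (outliers V A k u - {v})"
proof
  fix y assume "y \<in> {y. has_walk v1 y j}"
  then have y: "has_walk v1 y j"
    by simp
  have "0 < n"
    using assms(1) u1_ne_v1 by (cases n) auto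
  then have "j < k"
    using assms(2) by simp
  have "y \<noteq> v"
  proof
    assume "y = v"
    then have "has_walk v1 v1 (Suc j)"
      using has_walk_snocI[OF y] arc_v_iff by simp
    then show False
      using no_short_cycle \<open>j < k\<close> by simp
  qed
  moreover have "y \<in> outliers V A k u" if "y \<noteq> u"
  proof -
    have long: "has_walk u1 y k"
      using has_walk_add[OF assms(1) y] assms(2) by simp
    have "\<not> has_walk u y m" if "m \<le> k" for m
    proof
      assume "has_walk u y m"
      then obtain m' z where mz: "m = Suc m'" "A u z" "has_walk z y m'"
        using has_walk_first_arc \<open>y \<noteq> u\<close> by metis
      show False
      proof (cases "z = u1")
        case True
        then have "k = m'"
          using has_walk_length_unique[OF long] mz \<open>m \<le> k\<close> by simp
        then show False
          using mz \<open>m \<le> k\<close> by simp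
      next
        case False
        then have "u2 = v1"
          using has_walk_first_arc_unique[of v u2 v1 y m' j] arc_u_iff arc_v_iff mz y
            \<open>m \<le> k\<close> \<open>j < k\<close> by simp
        then show False
          using v1_ne_u2 by simp
      qed
    qed
    then show ?thesis
      using outliers_eq has_walk_in_V y by simp
  qed
  ultimately show "y \<in> insert u (outliers V A k u - {v})"
    by blast
qed

lemma no_walk_u1_v1_shorter: "n + 2 \<le> k \<Longrightarrow> \<not> has_walk u1 v1 n"
proof
  assume "n + 2 \<le> k" and walk: "has_walk u1 v1 n"
  define j where "j = k - n"
  have "(2::nat) ^ 2 \<le> 2 ^ j"
    using \<open>n + 2 \<le> k\<close> unfolding j_def by (intro power_increasing) auto
  then have "4 \<le> card {y. has_walk v1 y j}"
    using card_walk_targets[of j v1] out_nbrs_in_V unfolding j_def by simp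
  also have "\<dots> \<le> card (insert u (outliers V A k u - {v}))"
    using walk_targets_of_v1_in_outliers_of_u[OF walk, of j] \<open>n + 2 \<le> k\<close> finite_outliers
    unfolding j_def by (intro card_mono) auto
  also have "\<dots> \<le> 3"
    using card_outliers_eq_3[OF u_in_V] v_outlier_of_u[OF walk] \<open>n + 2 \<le> k\<close> finite_outliers
    by (simp add: card_insert_if)
  finally show False
    by simp
qed

lemma u_or_u1_outlier_of_v: "u \<in> outliers V A k v \<or> u1 \<in> outliers V A k v"
proof (rule ccontr)
  assume "\<not> ?thesis"
  then obtain s r where s: "s \<le> k" "has_walk v u s" and r: "r \<le> k" "has_walk v u1 r"
    using outliers_eq u_in_V out_nbrs_in_V by auto
  have far: "has_walk v1 u1 k"
    using common_out_nbr.walk_u1_v1_length_k_of_walk_u_v[OF common_out_nbr_swap s(2,1)] .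
  obtain r' z where rz: "r = Suc r'" "A v z" "has_walk z u1 r'"
    using has_walk_first_arc[OF r(2) v_ne_u1] .
  show False
  proof (cases "z = v1")
    case True
    then have "k = r'"
      using has_walk_length_unique[OF far] rz r by simp
    then show False
      using rz r by simp
  next
    case False
    then have "u2 = u1"
      using has_walk_first_arc_unique[of u u2 u1 u1 r' 0] arc_u_iff arc_v_iff rz r out_nbrs_in_V
        k_ge_3 by simp
    then show False
      using u1_ne_u2 by simp
  qed
qed

lemma walk_from_v1_to_non_outlier_of_v:
  assumes "has_walk u1 v1 n" "n < k" "has_walk u1 y m" "m < k" "y \<notin> outliers V A k v"
  obtains t where "t < k" "has_walk v1 y t"
proof -
  have "has_walk u y (Suc m)"
    using has_walk_ConsI[OF _ assms(3)] arc_u_iff by simp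
  then have "v \<noteq> y"
    using v_outlier_of_u[OF assms(1,2)] assms(4) outliers_eq by auto
  obtain s where "s \<le> k" "has_walk v y s"
    using assms(5) has_walk_in_V[OF assms(3)] outliers_eq by auto
  then obtain s' z where sz: "s = Suc s'" "s' < k" "A v z" "has_walk z y s'"
    using has_walk_first_arc \<open>v \<noteq> y\<close> by (metis Suc_le_lessD)
  have "z \<noteq> u2"
  proof
    assume "z = u2"
    then have "u1 = u2"
      using has_walk_first_arc_unique[of u u1 u2 y m s'] assms(3,4) sz arc_u_iff by simp
    then show False
      using u1_ne_u2 by simp
  qed
  then have "z = v1"
    using sz(3) arc_v_iff by blast
  then show thesis
    using that sz by simp
qed

lemma outliers_of_v_subset:
  assumes w: "has_walk u1 w (k - 2)" "A w v1" and w': "A w w'" "w' \<noteq> v1"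
  shows "outliers V A k v \<subseteq> {w, w', u, u1}"
proof -
  have walk: "has_walk u1 v1 (k - 1)" and w'_walk: "has_walk u1 w' (k - 1)"
    using has_walk_snocI[OF w(1)] w(2) w'(1) k_ge_3 by (simp_all add: Suc_diff_Suc numeral_2_eq_2)
  have "w \<in> outliers V A k v"
  proof (rule ccontr)
    assume "w \<notin> outliers V A k v"
    then obtain t where "t < k" "has_walk v1 w t"
      using walk_from_v1_to_non_outlier_of_v[OF walk _ w(1)] k_ge_3 by auto
    then show False
      using no_short_cycle[of "Suc t" w] has_walk_ConsI[OF w(2)] by auto
  qed
  moreover have "w' \<in> outliers V A k v"
  proof (rule ccontr)
    assume "w' \<notin> outliers V A k v"
    then obtain t where "t < k" "has_walk v1 w' t"
      using walk_from_v1_to_non_outlier_of_v[OF walk _ w'_walk] k_ge_3 by auto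
    then have "v1 = w'"
      using has_walk_first_arc_unique[of w v1 w' w' t 0] w w' has_walk_in_V k_ge_3 by simp
    then show False
      using w' by simp
  qed
  moreover obtain z where z: "z \<in> {u, u1}" "z \<in> outliers V A k v"
    using u_or_u1_outlier_of_v by blast
  moreover have "card {w, w', z} = 3"
  proof -
    have "w \<noteq> w'"
      using no_short_cycle[of 1 w] w' k_ge_3 by auto
    moreover have "w \<noteq> u" "w' \<noteq> u"
      using walk_from_u1_avoids_u w(1) w'_walk k_ge_3 by auto
    moreover have "w \<noteq> u1" "w' \<noteq> u1"
      using no_short_cycle w(1) w'_walk k_ge_3 by auto
    ultimately show ?thesis
      using z(1) by auto
  qed
  ultimately have "{w, w', z} = outliers V A k v"
    using card_subset_eq[OF finite_outliers] card_outliers_eq_3[OF v_in_V] by simp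
  then show ?thesis
    using z(1) by auto
qed

lemma walk_from_v1_outside:
  assumes "has_walk u1 w (k - 2)" "A w v1" "A w w'" "w' \<noteq> v1"
    and "has_walk u1 y m" "m < k" "y \<notin> {w, w', u, u1}"
  obtains t where "t < k" "has_walk v1 y t"
proof -
  have walk: "has_walk u1 v1 (k - 1)"
    using has_walk_snocI[OF assms(1,2)] k_ge_3 by (simp add: Suc_diff_Suc numeral_2_eq_2)
  have "y \<notin> outliers V A k v"
    using outliers_of_v_subset[OF assms(1-4)] assms(7) by blast
  moreover have "k - 1 < k"
    using k_ge_3 by simp
  ultimately show thesis
    using walk_from_v1_to_non_outlier_of_v[OF walk _ assms(5,6)] that by blast
qed

lemma walk_u1_v1_penultimate:
  assumes "has_walk u1 v1 (k - 1)"
  obtains g w w' x where "has_walk u1 g (k - 3)" "A g w" "A w v1" "A w w'" "w' \<noteq> v1"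
    "A g x" "x \<noteq> w"
proof -
  have "has_walk u1 v1 (Suc (Suc (k - 3)))"
    using assms k_ge_3 by (simp add: numeral_3_eq_3 Suc_diff_Suc)
  then obtain w where w: "has_walk u1 w (Suc (k - 3))" "A w v1"
    by (auto simp: has_walk_snoc)
  then obtain g where g: "has_walk u1 g (k - 3)" "A g w"
    by (auto simp: has_walk_snoc)
  obtain w' where "A w w'" "w' \<noteq> v1"
    using exists_other_out_nbr[OF le_refl] arc_in_V w(2) by blast
  moreover obtain x where "A g x" "x \<noteq> w"
    using exists_other_out_nbr[OF le_refl] arc_in_V g(2) by blast
  ultimately show thesis
    using that g w(2) by blast
qed

lemma walk_from_v1_to_sibling:
  assumes g: "has_walk u1 g (k - 3)" "A g w" and w: "A w v1" "A w w'" "w' \<noteq> v1"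
    and x: "A g x" "x \<noteq> w"
  obtains t where "t < k" "has_walk v1 x t"
proof -
  have w_walk: "has_walk u1 w (k - 2)" and w'_walk: "has_walk u1 w' (k - 1)"
    and x_walk: "has_walk u1 x (k - 2)"
    using has_walk_snocI[OF g(1)] has_walk_snocI[OF has_walk_snocI[OF g]] g(2) w(2) x(1) k_ge_3
    by (simp_all add: numeral_3_eq_3 numeral_2_eq_2 Suc_diff_Suc)
  have "x \<notin> {w, w', u, u1}"
    using no_short_cycle[of "k - 2" u1] has_walk_length_unique[of u1 x "k - 2" "k - 1"] w'_walk
      walk_from_u1_avoids_u[OF x_walk] x_walk x(2) k_ge_3 by auto
  moreover have "k - 2 < k"
    using k_ge_3 by simp
  ultimately show thesis
    using walk_from_v1_outside[OF w_walk w x_walk] that by blast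
qed

lemma no_walk_u1_v1_length_k_minus_1_of_ge_4:
  assumes "4 \<le> k"
  shows "\<not> has_walk u1 v1 (k - 1)"
proof
  assume "has_walk u1 v1 (k - 1)"
  then obtain g w w' x where g: "has_walk u1 g (k - 3)" "A g w"
    and w: "A w v1" "A w w'" "w' \<noteq> v1" and x: "A g x" "x \<noteq> w"
    by (rule walk_u1_v1_penultimate)
  have w_walk: "has_walk u1 w (k - 2)" and w'_walk: "has_walk u1 w' (k - 1)"
    using has_walk_snocI[OF g(1)] has_walk_snocI[OF has_walk_snocI[OF g]] g(2) w(2) assms
    by (simp_all add: numeral_3_eq_3 numeral_2_eq_2 Suc_diff_Suc)
  have "g \<notin> {w, w', u, u1}"
    using no_short_cycle[of 1 g] no_short_cycle[of "k - 3" u1]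
      has_walk_length_unique[of u1 g "k - 3" "k - 1"] w'_walk walk_from_u1_avoids_u[OF g(1)] g assms
    by auto
  moreover have "k - 3 < k"
    using assms by simp
  ultimately obtain tg where tg: "tg < k" "has_walk v1 g tg"
    using walk_from_v1_outside[OF w_walk w g(1)] by blast
  have "k < Suc (Suc tg)"
    using no_short_cycle[of "Suc (Suc tg)" g] has_walk_ConsI[OF g(2) has_walk_ConsI[OF w(1) tg(2)]]
    by (meson not_less zero_less_Suc)
  then have far: "has_walk v1 x k"
    using has_walk_snocI[OF tg(2) x(1)] tg(1) by (simp add: less_Suc_eq)
  obtain tx where tx: "tx < k" "has_walk v1 x tx"
    using walk_from_v1_to_sibling[OF g w x] .
  then have "k = tx"
    using has_walk_length_unique[OF far tx(2)] by linarith
  then show False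
    using tx(1) by simp
qed

lemma no_walk_u1_v1_length_2_of_eq_3:
  assumes "k = 3"
  shows "\<not> has_walk u1 v1 2"
proof
  assume walk: "has_walk u1 v1 2"
  then have "has_walk u1 v1 (k - 1)"
    using assms by simp
  then obtain g w w' x where g: "has_walk u1 g (k - 3)" "A g w"
    and w: "A w v1" "A w w'" "w' \<noteq> v1" and x: "A g x" "x \<noteq> w"
    by (rule walk_u1_v1_penultimate)
  obtain tx where tx: "tx < k" "has_walk v1 x tx"
    using walk_from_v1_to_sibling[OF g w x] .
  have w_walk: "has_walk u1 w (k - 2)" and x_walk: "has_walk u1 x 1"
    using g x(1) assms by simp_all
  have "tx = 2"
  proof (rule ccontr)
    assume "tx \<noteq> 2"
    then have "2 + tx \<le> k"
      using tx(1) assms by simp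
    then have "2 + tx = 1"
      using has_walk_length_unique[OF has_walk_add[OF walk tx(2)] x_walk] assms by simp
    then show False
      by simp
  qed
  obtain x1 where x1: "A x x1"
    using exists_other_out_nbr[OF le_refl] arc_in_V x(1) by blast
  have x1_walk: "has_walk u1 x1 2"
    using has_walk_snocI[OF x_walk x1] by (simp add: numeral_2_eq_2)
  have "x1 \<noteq> w'"
    using has_walk_first_arc_unique[of g w x w' 1 1] g(2) w(2) x x1 assms by auto
  then have "x1 \<notin> {w, w', u, u1}"
    using has_walk_length_unique[of u1 x1 2 1] w_walk walk_from_u1_avoids_u[OF x1_walk]
      no_short_cycle[of 2 u1] x1_walk assms by auto
  moreover have "2 < k"
    using assms by simp
  ultimately obtain t1 where t1: "t1 < k" "has_walk v1 x1 t1"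
    using walk_from_v1_outside[OF w_walk w x1_walk] by blast
  have "has_walk v1 x1 3"
    using has_walk_snocI[OF tx(2) x1] \<open>tx = 2\<close> by (simp add: numeral_3_eq_3)
  then have "3 = t1"
    using has_walk_length_unique[OF _ t1(2)] t1(1) assms by simp
  then show False
    using t1(1) assms by simp
qed

lemma no_walk_u1_v1_length_k_minus_1: "\<not> has_walk u1 v1 (k - 1)"
  using no_walk_u1_v1_length_k_minus_1_of_ge_4 no_walk_u1_v1_length_2_of_eq_3 k_ge_3
  by (cases "k = 3") auto

lemma v1_outlier_of_u: "v1 \<in> outliers V A k u"
proof -
  have "\<not> has_walk u v1 n" if n: "n \<le> k" for n
  proof
    assume "has_walk u v1 n"
    then obtain m where m: "n = Suc m" "has_walk u1 v1 m"
      using walk_u_v1_starts_at_u1[OF _ n] by blast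
    then have "m = k - 1 \<or> m + 2 \<le> k"
      using n by arith
    then show False
      using no_walk_u1_v1_shorter no_walk_u1_v1_length_k_minus_1 m(2) by blast
  qed
  then show ?thesis
    using outliers_eq out_nbrs_in_V by simp
qed

end

theorem theorem3:
  fixes V :: "'a set" and A :: "'a \<Rightarrow> 'a \<Rightarrow> bool" and k :: nat and u v u1 u2 v1 :: 'a
  assumes "k \<ge> 3"
    and "dke_digraph V A 2 k 3"
    and "u \<in> V" and "v \<in> V" and "u \<noteq> v"
    and "out_nbrs V A u \<inter> out_nbrs V A v = {u2}"
    and "out_nbrs V A u = {u1, u2}"
    and "out_nbrs V A v = {v1, u2}"
  shows "v1 \<in> outliers V A k u \<and> u1 \<in> outliers V A k v"
proof -
  have G: "diregular_digraph V A 2" "k_geodetic V A k" "card V = moore_bound 2 k + 3"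
    using assms(2) unfolding dke_digraph_def by auto
  then have "out_regular_geodetic V A k 2"
    unfolding diregular_digraph_def by unfold_locales auto
  then interpret common_out_nbr V A k u v u1 u2 v1
    using assms G(3) by (intro common_out_nbr.intro common_out_nbr_axioms.intro)
  show ?thesis
    using v1_outlier_of_u common_out_nbr.v1_outlier_of_u[OF common_out_nbr_swap] by blast
qed

end
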